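(* The following randomized mechanism obtains a $4$-approximation to the optimal social welfare for bidders with additive valuations, i.e., for every profile of additive valuations, its expected welfare (when bidders act truthfully) is at least $\mathrm{OPT}/4$. Index the bidders in an arbitrary fixed order. Independently place each bidder in a set $S$ with probability $1/2$ and in a set $U$ otherwise. Bidders in $S$ receive nothing and report their value for each item. For each item $j$, set price $p_j=\max_{i\in S}v_{ij}$ and let $n(j)$ be the smallest index among bidders in $\arg\max_{i\in S}v_{ij}$. Then, for each $i\in U$ in an arbitrary order, bidder $i$ purchases all previously unsold items $j$ for which either $v_{ij}>p_j$, or $v_{ij}=p_j$ and $i$ has a lower index than $n(j)$.
   Context: Combinatorial auction with item set $M$ and bidder set $N$; bidder $i$ has an additive valuation: values $v_{ij}\ge0$ with $v_i(A)=\sum_{j\in A}v_{ij}$. $\mathrm{OPT}$ is the maximum over allocations of disjoint bundles $(T_1,\dots,T_n)$ of $\sum_i v_i(T_i)$. Truthful behavior of a bidder in $U$ means purchasing exactly the items described; bidders in $S$ report their true values. The expectation is over the random placement of bidders. *)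

theory Defs
  imports Complex_Main
begin

(* Bidders are natural numbers (their index is the number itself); N is the finite
   bidder set, M the finite item set, v i j the value of bidder i for item j. *)

definition welfare :: "nat set \<Rightarrow> (nat \<Rightarrow> 'm \<Rightarrow> real) \<Rightarrow> (nat \<Rightarrow> 'm set) \<Rightarrow> real" where
  "welfare N v T = (\<Sum>i\<in>N. \<Sum>j\<in>T i. v i j)"

definition allocation :: "nat set \<Rightarrow> 'm set \<Rightarrow> (nat \<Rightarrow> 'm set) \<Rightarrow> bool" where
  "allocation N M T \<longleftrightarrow> (\<forall>i\<in>N. T i \<subseteq> M) \<and>
      (\<forall>i\<in>N. \<forall>k\<in>N. i \<noteq> k \<longrightarrow> T i \<inter> T k = {})"

definition OPT :: "nat set \<Rightarrow> 'm set \<Rightarrow> (nat \<Rightarrow> 'm \<Rightarrow> real) \<Rightarrow> real" where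
  "OPT N M v = (SUP T\<in>{T. allocation N M T}. welfare N v T)"

definition price :: "nat set \<Rightarrow> (nat \<Rightarrow> 'm \<Rightarrow> real) \<Rightarrow> 'm \<Rightarrow> real" where
  "price S v j = (if S = {} then 0 else Max ((\<lambda>i. v i j) ` S))"

definition tiebidder :: "nat set \<Rightarrow> (nat \<Rightarrow> 'm \<Rightarrow> real) \<Rightarrow> 'm \<Rightarrow> nat" where
  "tiebidder S v j = (LEAST i. i \<in> S \<and> v i j = price S v j)"

definition wants :: "nat set \<Rightarrow> nat set \<Rightarrow> (nat \<Rightarrow> 'm \<Rightarrow> real) \<Rightarrow> nat \<Rightarrow> 'm \<Rightarrow> bool" where
  "wants N S v i j \<longleftrightarrow> i \<in> N - S \<and>
     (v i j > price S v j \<or> (S \<noteq> {} \<and> v i j = price S v j \<and> i < tiebidder S v j))"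

(* Bidders of U are processed in the order given by the injective rank function r
   (smaller rank = earlier); item j goes to the first bidder in that order who wants it. *)
definition mech_welfare ::
  "nat set \<Rightarrow> 'm set \<Rightarrow> (nat \<Rightarrow> 'm \<Rightarrow> real) \<Rightarrow> (nat \<Rightarrow> nat) \<Rightarrow> nat set \<Rightarrow> real" where
  "mech_welfare N M v r S =
     (\<Sum>j\<in>M. if (\<exists>i. wants N S v i j)
              then v (ARG_MIN r i. wants N S v i j) j else 0)"

(* S is a uniformly random subset of N (each bidder independently in S w.p. 1/2);
   the processing order of U may depend on S. *)
definition expected_mech_welfare ::
  "nat set \<Rightarrow> 'm set \<Rightarrow> (nat \<Rightarrow> 'm \<Rightarrow> real) \<Rightarrow> (nat set \<Rightarrow> nat \<Rightarrow> nat) \<Rightarrow> real" where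
  "expected_mech_welfare N M v \<sigma> =
     (\<Sum>S\<in>Pow N. (1/2) ^ card S * (1/2) ^ card (N - S) * mech_welfare N M v (\<sigma> S) S)"

end

theory Submission
  imports Defs
begin

text \<open>
  OPT is at most \<open>\<Sum>\<^sub>j max\<^sub>i v\<^sub>i\<^sub>j\<close>, so it suffices to show that every item j contributes
  at least \<open>max\<^sub>i v\<^sub>i\<^sub>j / 4\<close> in expectation. Let \<open>i\<^sub>1\<close> be the highest bidder on j (ties broken
  towards the smaller index) and \<open>i\<^sub>2\<close> the highest among the others. With probability 1/4,
  \<open>i\<^sub>1 \<in> U\<close> and \<open>i\<^sub>2 \<in> S\<close>; then \<open>p\<^sub>j = v\<^sub>i\<^sub>2\<^sub>j\<close> with tie bidder \<open>i\<^sub>2\<close>, so \<open>i\<^sub>1\<close> is the only bidder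
  of U who wants j, and j yields \<open>v\<^sub>i\<^sub>1\<^sub>j\<close> whatever the processing order. All other outcomes
  contribute nonnegatively. With a single bidder the event \<open>S = {}\<close> of probability 1/2 does
  the same job.
\<close>

definition lex_argmax :: "nat set \<Rightarrow> (nat \<Rightarrow> 'a::linorder) \<Rightarrow> nat \<Rightarrow> bool" where
  "lex_argmax A f a \<longleftrightarrow> a \<in> A \<and> (\<forall>i\<in>A. f i \<le> f a) \<and> (\<forall>i\<in>A. f i = f a \<longrightarrow> a \<le> i)"

lemma lex_argmax_exists:
  fixes f :: "nat \<Rightarrow> 'a::linorder"
  assumes "finite A" "A \<noteq> {}"
  obtains a where "lex_argmax A f a"
proof -
  let ?m = "Max (f ` A)"
  have "?m \<in> f ` A"
    using assms by simp
  then obtain i0 where i0: "i0 \<in> A \<and> f i0 = ?m"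
    by (metis imageE)
  define a where "a = (LEAST i. i \<in> A \<and> f i = ?m)"
  have a: "a \<in> A \<and> f a = ?m"
    unfolding a_def by (rule LeastI[of _ i0]) (rule i0)
  have "a \<le> i" if "i \<in> A" "f i = f a" for i
    unfolding a_def by (rule Least_le) (use that a in simp)
  then have "lex_argmax A f a"
    using a assms unfolding lex_argmax_def by simp
  then show thesis by (rule that)
qed

lemma lex_argmax_subset:
  assumes "lex_argmax A f a" "a \<in> B" "B \<subseteq> A"
  shows "lex_argmax B f a"
  using assms unfolding lex_argmax_def by blast

lemma price_eq_lex_argmax:
  assumes "finite S" "lex_argmax S (\<lambda>i. v i j) a"
  shows "price S v j = v a j"
  using assms unfolding lex_argmax_def price_def
  by (auto intro!: Max_eqI)

lemma tiebidder_eq_lex_argmax: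
  assumes "finite S" "lex_argmax S (\<lambda>i. v i j) a"
  shows "tiebidder S v j = a"
proof -
  have "price S v j = v a j"
    using assms by (rule price_eq_lex_argmax)
  then show ?thesis
    unfolding tiebidder_def
    by (intro Least_equality) (use assms(2) in \<open>auto simp: lex_argmax_def\<close>)
qed

definition item_value :: "nat set \<Rightarrow> (nat \<Rightarrow> 'm \<Rightarrow> real) \<Rightarrow> (nat \<Rightarrow> nat) \<Rightarrow> nat set \<Rightarrow> 'm \<Rightarrow> real" where
  "item_value N v r S j = (if \<exists>i. wants N S v i j then v (ARG_MIN r i. wants N S v i j) j else 0)"

lemma mech_welfare_eq_sum_item_value:
  "mech_welfare N M v r S = (\<Sum>j\<in>M. item_value N v r S j)"
  unfolding mech_welfare_def item_value_def ..

lemma item_value_nonneg: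
  assumes "\<And>i. i \<in> N \<Longrightarrow> v i j \<ge> 0"
  shows "item_value N v r S j \<ge> 0"
proof (cases "\<exists>i. wants N S v i j")
  case True
  then have "wants N S v (ARG_MIN r i. wants N S v i j) j"
    by (metis arg_min_natI)
  then have "(ARG_MIN r i. wants N S v i j) \<in> N"
    unfolding wants_def by blast
  then show ?thesis
    using True assms unfolding item_value_def by simp
qed (simp add: item_value_def)

lemma item_value_unique_buyer:
  assumes "\<And>i. wants N S v i j \<longleftrightarrow> i = a"
  shows "item_value N v r S j = v a j"
proof -
  have "wants N S v (ARG_MIN r i. wants N S v i j) j"
    by (rule arg_min_natI[of _ a]) (simp add: assms)
  then show ?thesis
    unfolding item_value_def using assms by auto
qed

lemma item_value_top_bidder:
  assumes "finite N" "S \<subseteq> N - {i\<^sub>1}" "i\<^sub>2 \<in> S"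
    and top: "lex_argmax N (\<lambda>i. v i j) i\<^sub>1"
    and runner_up: "lex_argmax (N - {i\<^sub>1}) (\<lambda>i. v i j) i\<^sub>2"
  shows "item_value N v r S j = v i\<^sub>1 j"
proof (rule item_value_unique_buyer)
  have "finite S"
    using assms(1,2) finite_subset by blast
  moreover have "lex_argmax S (\<lambda>i. v i j) i\<^sub>2"
    using lex_argmax_subset[OF runner_up assms(3,2)] .
  ultimately have price: "price S v j = v i\<^sub>2 j" and tie: "tiebidder S v j = i\<^sub>2"
    by (rule price_eq_lex_argmax, rule tiebidder_eq_lex_argmax)
  fix i
  show "wants N S v i j \<longleftrightarrow> i = i\<^sub>1"
  proof
    assume wants: "wants N S v i j"
    show "i = i\<^sub>1"
    proof (rule ccontr)
      assume "i \<noteq> i\<^sub>1"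
      then have "i \<in> N - {i\<^sub>1}"
        using wants unfolding wants_def by blast
      then have "v i j \<le> v i\<^sub>2 j" "v i j = v i\<^sub>2 j \<Longrightarrow> i\<^sub>2 \<le> i"
        using runner_up unfolding lex_argmax_def by blast+
      then show False
        using wants unfolding wants_def price tie by auto
    qed
  next
    assume "i = i\<^sub>1"
    moreover have "i\<^sub>1 \<in> N - S" "i\<^sub>2 \<in> N" "i\<^sub>1 \<noteq> i\<^sub>2"
      using runner_up top assms(2) unfolding lex_argmax_def by auto
    moreover have "v i\<^sub>2 j \<le> v i\<^sub>1 j" "v i\<^sub>2 j = v i\<^sub>1 j \<Longrightarrow> i\<^sub>1 \<le> i\<^sub>2"
      using top \<open>i\<^sub>2 \<in> N\<close> unfolding lex_argmax_def by auto
    ultimately show "wants N S v i j"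
      using assms(3) unfolding wants_def price tie by force
  qed
qed

lemma item_value_single_bidder:
  assumes "v i j \<ge> 0"
  shows "item_value {i} v r {} j = v i j"
proof (cases "v i j > 0")
  case True
  then have "wants {i} {} v k j \<longleftrightarrow> k = i" for k
    unfolding wants_def price_def by auto
  then show ?thesis by (rule item_value_unique_buyer)
next
  case False
  then have "\<not> wants {i} {} v k j" for k
    unfolding wants_def price_def by auto
  then show ?thesis
    using False assms unfolding item_value_def by simp
qed

lemma card_subsets_excluding_including:
  assumes "finite N" "a \<in> N" "b \<in> N" "a \<noteq> b"
  shows "4 * card {S \<in> Pow N. a \<notin> S \<and> b \<in> S} = 2 ^ card N"
proof -
  let ?R = "N - {a, b}"
  have "bij_betw (insert b) (Pow ?R) {S \<in> Pow N. a \<notin> S \<and> b \<in> S}"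
    by (rule bij_betw_byWitness[where f' = "\<lambda>S. S - {b}"]) (use assms in auto)
  then have "card {S \<in> Pow N. a \<notin> S \<and> b \<in> S} = card (Pow ?R)"
    by (simp add: bij_betw_same_card)
  also have "\<dots> = 2 ^ card ?R"
    using assms(1) by (simp add: card_Pow)
  finally have "card {S \<in> Pow N. a \<notin> S \<and> b \<in> S} = 2 ^ card ?R" .
  moreover have "card N = card ?R + 2"
  proof -
    have "card {a, b} \<le> card N"
      using assms by (intro card_mono) auto
    then show ?thesis
      using assms by (simp add: card_Diff_subset)
  qed
  ultimately show ?thesis
    by (simp add: power_add)
qed

definition expected_item_value ::
  "nat set \<Rightarrow> (nat \<Rightarrow> 'm \<Rightarrow> real) \<Rightarrow> (nat set \<Rightarrow> nat \<Rightarrow> nat) \<Rightarrow> 'm \<Rightarrow> real" where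
  "expected_item_value N v \<sigma> j = (\<Sum>S\<in>Pow N. (1/2) ^ card N * item_value N v (\<sigma> S) S j)"

lemma expected_item_value_ge_top_bidder:
  assumes "finite N" "\<And>i. i \<in> N \<Longrightarrow> v i j \<ge> 0"
    and top: "lex_argmax N (\<lambda>i. v i j) i\<^sub>1"
    and runner_up: "lex_argmax (N - {i\<^sub>1}) (\<lambda>i. v i j) i\<^sub>2"
  shows "v i\<^sub>1 j / 4 \<le> expected_item_value N v \<sigma> j"
proof -
  let ?G = "{S \<in> Pow N. i\<^sub>1 \<notin> S \<and> i\<^sub>2 \<in> S}"
  have "i\<^sub>1 \<in> N" "i\<^sub>2 \<in> N" "i\<^sub>1 \<noteq> i\<^sub>2"
    using top runner_up unfolding lex_argmax_def by auto
  with assms(1) have "4 * card ?G = 2 ^ card N"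
    by (intro card_subsets_excluding_including)
  then have "real (4 * card ?G) = real (2 ^ card N)"
    by (simp only:)
  then have "4 * real (card ?G) = 2 ^ card N"
    by simp
  then have "v i\<^sub>1 j / 4 = (\<Sum>S\<in>?G. (1/2) ^ card N * v i\<^sub>1 j)"
    by (simp add: field_simps)
  also have "\<dots> = (\<Sum>S\<in>?G. (1/2) ^ card N * item_value N v (\<sigma> S) S j)"
    by (intro sum.cong refl arg_cong2[where f = "(*)"] item_value_top_bidder[symmetric])
      (use assms in auto)
  also have "\<dots> \<le> expected_item_value N v \<sigma> j"
    unfolding expected_item_value_def using assms(1)
    by (intro sum_mono2) (auto intro!: mult_nonneg_nonneg item_value_nonneg assms(2))
  finally show ?thesis .
qed

lemma expected_item_value_single_bidder:
  assumes "v i j \<ge> 0"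
  shows "v i j / 2 \<le> expected_item_value {i} v \<sigma> j"
proof -
  have "Pow {i} = {{}, {i}}"
    by blast
  then have "expected_item_value {i} v \<sigma> j
      = (item_value {i} v (\<sigma> {}) {} j + item_value {i} v (\<sigma> {i}) {i} j) / 2"
    unfolding expected_item_value_def by simp
  moreover have "0 \<le> item_value {i} v (\<sigma> {i}) {i} j"
    using assms by (intro item_value_nonneg) simp
  ultimately show ?thesis
    using item_value_single_bidder[of v i j "\<sigma> {}"] assms by simp
qed

lemma expected_item_value_ge_price:
  assumes "finite N" "\<And>i. i \<in> N \<Longrightarrow> v i j \<ge> 0"
  shows "price N v j / 4 \<le> expected_item_value N v \<sigma> j"
proof (cases "N = {}")
  case True
  have "0 \<le> expected_item_value N v \<sigma> j"
    unfolding expected_item_value_def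
    by (intro sum_nonneg mult_nonneg_nonneg item_value_nonneg) (use True in auto)
  then show ?thesis
    using True by (simp add: price_def)
next
  case False
  obtain i\<^sub>1 where top: "lex_argmax N (\<lambda>i. v i j) i\<^sub>1"
    by (rule lex_argmax_exists[OF assms(1) False])
  have price: "price N v j = v i\<^sub>1 j"
    using assms(1) top by (rule price_eq_lex_argmax)
  have "i\<^sub>1 \<in> N"
    using top unfolding lex_argmax_def by blast
  show ?thesis
  proof (cases "N = {i\<^sub>1}")
    case True
    then show ?thesis
      using expected_item_value_single_bidder[of v i\<^sub>1 j \<sigma>] assms(2) \<open>i\<^sub>1 \<in> N\<close>
      unfolding price by simp
  next
    case False
    then have "N - {i\<^sub>1} \<noteq> {}"
      using \<open>i\<^sub>1 \<in> N\<close> by blast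
    with assms(1) obtain i\<^sub>2 where "lex_argmax (N - {i\<^sub>1}) (\<lambda>i. v i j) i\<^sub>2"
      by (metis finite_Diff lex_argmax_exists)
    with assms top show ?thesis
      unfolding price by (rule expected_item_value_ge_top_bidder)
  qed
qed

lemma expected_mech_welfare_eq_sum_expected_item_value:
  assumes "finite N"
  shows "expected_mech_welfare N M v \<sigma> = (\<Sum>j\<in>M. expected_item_value N v \<sigma> j)"
proof -
  have "(1/2::real) ^ card S * (1/2) ^ card (N - S) = (1/2) ^ card N" if "S \<subseteq> N" for S
    using assms that by (simp add: card_Diff_subset card_mono finite_subset flip: power_add)
  then have "expected_mech_welfare N M v \<sigma>
      = (\<Sum>S\<in>Pow N. (1/2) ^ card N * (\<Sum>j\<in>M. item_value N v (\<sigma> S) S j))"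
    unfolding expected_mech_welfare_def mech_welfare_eq_sum_item_value by simp
  also have "\<dots> = (\<Sum>j\<in>M. expected_item_value N v \<sigma> j)"
    unfolding expected_item_value_def by (simp add: sum_distrib_left sum.swap[of _ "Pow N"])
  finally show ?thesis .
qed

lemma welfare_le_sum_price:
  assumes "finite N" "finite M" "\<And>i j. i \<in> N \<Longrightarrow> j \<in> M \<Longrightarrow> v i j \<ge> 0"
    and "allocation N M T"
  shows "welfare N v T \<le> (\<Sum>j\<in>M. price N v j)"
proof (cases "N = {}")
  case True
  then show ?thesis unfolding welfare_def by (simp add: price_def)
next
  case False
  have sub: "\<forall>i\<in>N. T i \<subseteq> M" and disj: "\<forall>i\<in>N. \<forall>k\<in>N. i \<noteq> k \<longrightarrow> T i \<inter> T k = {}"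
    using assms(4) unfolding allocation_def by auto
  have le_price: "v i j \<le> price N v j" if "i \<in> N" for i j
    unfolding price_def using assms(1) that by (auto intro: Max_ge)
  have price_nonneg: "0 \<le> price N v j" if "j \<in> M" for j
    using False le_price assms(3) that by (meson ex_in_conv order_trans)
  have "welfare N v T \<le> (\<Sum>i\<in>N. \<Sum>j\<in>T i. price N v j)"
    unfolding welfare_def by (intro sum_mono) (use le_price in blast)
  also have "\<dots> = (\<Sum>j\<in>(\<Union>i\<in>N. T i). price N v j)"
    using assms(1,2) sub disj by (intro sum.UNION_disjoint[symmetric]) (auto intro: finite_subset)
  also have "\<dots> \<le> (\<Sum>j\<in>M. price N v j)"
    using assms(2) sub price_nonneg by (intro sum_mono2) auto
  finally show ?thesis .
qed

lemma OPT_le_sum_price: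
  assumes "finite N" "finite M" "\<And>i j. i \<in> N \<Longrightarrow> j \<in> M \<Longrightarrow> v i j \<ge> 0"
  shows "OPT N M v \<le> (\<Sum>j\<in>M. price N v j)"
proof -
  have "allocation N M (\<lambda>_. {})"
    unfolding allocation_def by simp
  then show ?thesis
    unfolding OPT_def using welfare_le_sum_price[OF assms]
    by (intro cSUP_least) auto
qed

theorem lemma4p3:
  fixes N :: "nat set" and M :: "'m set" and v :: "nat \<Rightarrow> 'm \<Rightarrow> real"
    and \<sigma> :: "nat set \<Rightarrow> nat \<Rightarrow> nat"
  assumes "finite N" and "finite M"
    and "\<And>i j. i \<in> N \<Longrightarrow> j \<in> M \<Longrightarrow> v i j \<ge> 0"
    and "\<And>S. S \<subseteq> N \<Longrightarrow> inj_on (\<sigma> S) (N - S)"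
  shows "expected_mech_welfare N M v \<sigma> \<ge> OPT N M v / 4"
proof -
  have "OPT N M v / 4 \<le> (\<Sum>j\<in>M. price N v j) / 4"
    using OPT_le_sum_price[OF assms(1-3)] by simp
  also have "\<dots> = (\<Sum>j\<in>M. price N v j / 4)"
    by (simp add: sum_divide_distrib)
  also have "\<dots> \<le> (\<Sum>j\<in>M. expected_item_value N v \<sigma> j)"
    using assms(1,3) by (intro sum_mono expected_item_value_ge_price) auto
  also have "\<dots> = expected_mech_welfare N M v \<sigma>"
    using assms(1) by (rule expected_mech_welfare_eq_sum_expected_item_value[symmetric])
  finally show ?thesis .
qed

end
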